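(* Let $n$ be a positive integer with $n\notin\{4,8,12\}$. Then there does not exist any product design $PD\big(n;\ 1_{(3)};\ 1_{(3)};\ n-3\big)$, i.e. there is no product design $(M_1;M_2;N)$ of order $n$ in which $M_1$ and $M_2$ are each orthogonal designs of type $(1,1,1)$ and $N$ is an orthogonal design of type $(n-3)$.
   Context: An orthogonal design $OD(n;\ c_1,\ldots,c_k)$ is a square matrix $C$ of order $n$ with entries from $\{0,\pm x_1,\ldots,\pm x_k\}$, where $x_1,\ldots,x_k$ are commuting indeterminates, such that $CC^{\rm T}=\big(\sum_{j=1}^k c_jx_j^2\big)I_n$; $(c_1,\ldots,c_k)$ is its type. The notation $u_{(k)}$ in a type means that $u$ is repeated $k$ times. For matrices $A=[a_{ij}]$, $B=[b_{ij}]$ of the same size, the Hadamard product is $A*B=[a_{ij}b_{ij}]$, and $\mathbf 0$ is the zero matrix. A product design $PD\big(n;\ a_1,\ldots,a_r;\ b_1,\ldots,b_s;\ u_1,\ldots,u_t\big)$ is a triple $(M_1;M_2;N)$ where $M_1$, $M_2$, $N$ are orthogonal designs of order $n$ and types $(a_1,\ldots,a_r)$, $(b_1,\ldots,b_s)$, $(u_1,\ldots,u_t)$ respectively, such that (i) $M_1*N=M_2*N=\mathbf 0$; (ii) $M_1+N$ and $M_2+N$ are orthogonal designs; (iii) $M_1M_2^{\rm T}=M_2M_1^{\rm T}$. *)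

theory Defs
  imports Complex_Main
begin

text \<open>
  A matrix of order n over the signed indeterminates is encoded as
  C :: nat \<Rightarrow> nat \<Rightarrow> int (only indices < n matter): code 0 means the entry 0,
  code e \<noteq> 0 means the entry sgn(e) * x_{|e|}, where the indeterminates are
  x_1, ..., x_k (code j refers to the j-th entry of the type list, 1-based).
  Polynomial identities in the commuting indeterminates are expressed as
  identities holding for all real values of the indeterminates
  (equivalent, as the real field is infinite).
\<close>

definition od_val :: "int \<Rightarrow> (nat \<Rightarrow> real) \<Rightarrow> real" where
  "od_val e x = (if e = 0 then 0 else of_int (sgn e) * x (nat \<bar>e\<bar>))"

definition is_OD :: "nat \<Rightarrow> int list \<Rightarrow> (nat \<Rightarrow> nat \<Rightarrow> int) \<Rightarrow> bool" where
  "is_OD n cs C \<longleftrightarrow>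
     (\<forall>i<n. \<forall>j<n. \<bar>C i j\<bar> \<le> int (length cs)) \<and>
     (\<forall>x :: nat \<Rightarrow> real. \<forall>i<n. \<forall>l<n.
        (\<Sum>m<n. od_val (C i m) x * od_val (C l m) x) =
        (if i = l then (\<Sum>j\<in>{1..length cs}. of_int (cs ! (j - 1)) * (x j)^2) else 0))"

text \<open>Shift the variables of a design by s (to give it fresh indeterminates).\<close>
definition od_shift :: "nat \<Rightarrow> int \<Rightarrow> int" where
  "od_shift s e = (if e = 0 then 0 else e + sgn e * int s)"

text \<open>Product design PD(n; a; b; u) = (M1; M2; N); the three designs have
  pairwise distinct sets of indeterminates.\<close>
definition is_PD :: "nat \<Rightarrow> int list \<Rightarrow> int list \<Rightarrow> int list \<Rightarrow>
    (nat \<Rightarrow> nat \<Rightarrow> int) \<Rightarrow> (nat \<Rightarrow> nat \<Rightarrow> int) \<Rightarrow> (nat \<Rightarrow> nat \<Rightarrow> int) \<Rightarrow> bool" where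
  "is_PD n a b u M1 M2 N \<longleftrightarrow>
     is_OD n a M1 \<and> is_OD n b M2 \<and> is_OD n u N \<and>
     \<comment> \<open>(i) Hadamard products vanish\<close>
     (\<forall>x y :: nat \<Rightarrow> real. \<forall>i<n. \<forall>j<n. od_val (M1 i j) x * od_val (N i j) y = 0) \<and>
     (\<forall>x y :: nat \<Rightarrow> real. \<forall>i<n. \<forall>j<n. od_val (M2 i j) x * od_val (N i j) y = 0) \<and>
     \<comment> \<open>(ii) M1 + N and M2 + N are orthogonal designs\<close>
     is_OD n (a @ u) (\<lambda>i j. M1 i j + od_shift (length a) (N i j)) \<and>
     is_OD n (b @ u) (\<lambda>i j. M2 i j + od_shift (length b) (N i j)) \<and>
     \<comment> \<open>(iii) M1 M2^T = M2 M1^T\<close>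
     (\<forall>x y :: nat \<Rightarrow> real. \<forall>i<n. \<forall>l<n.
        (\<Sum>m<n. od_val (M1 i m) x * od_val (M2 l m) y) =
        (\<Sum>m<n. od_val (M2 i m) y * od_val (M1 l m) x))"

end

theory Submission
  imports Defs
begin

text \<open>
  Each row of an OD of type (1,1,1) carries each of x1, x2, x3 in exactly one column. By (i),
  the n - 3 nonzero entries in a row of N avoid these three columns and hence fill all the
  others; so M1 and M2 have the same support, and setting all indeterminates to 1 in M1 + N
  gives a Hadamard matrix, whence 4 divides n. Call two rows linked when their supports meet;
  linked rows form classes of at most four rows. In each row r, x1 of M1 shares its column with
  some indeterminate x_j(r) of M2. Orthogonality of M1 + N and of M2 + N on the entries of N
  shows that two unlinked rows with j(r) = j(l) have the same product of the signs of these
  two entries, while orthogonality within the designs and the commutation condition (iii)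
  produce, linked to r, a row with the same j and the opposite sign product. Hence unlinked
  rows have different j, there are at most three classes, and n \<le> 12.
\<close>

definition single_var :: "nat \<Rightarrow> nat \<Rightarrow> real" where
  "single_var k = (\<lambda>t. if t = k then 1 else 0)"

lemma od_val_add: "od_val e (\<lambda>t. x t + y t) = od_val e x + od_val e y"
  by (simp add: od_val_def algebra_simps)

lemma od_val_single_var:
  "k > 0 \<Longrightarrow> od_val e (single_var k) = (if \<bar>e\<bar> = int k then of_int (sgn e) else 0)"
  by (auto simp: od_val_def single_var_def)

lemma od_val_const_one: "od_val e (\<lambda>_. 1) = of_int (sgn e)"
  by (simp add: od_val_def)

lemma sum_lessThan_delta_mult:
  fixes u :: real and n p :: nat
  shows "(\<Sum>m<n. (if m = p then u else 0) * f m) = (if p < n then u * f p else 0)"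
proof -
  have "(\<Sum>m<n. (if m = p then u else 0) * f m) = (\<Sum>m<n. if m = p then u * f p else 0)"
    by (rule sum.cong) auto
  then show ?thesis by simp
qed

lemma sum_lessThan_indicator:
  "(\<Sum>m<(n::nat). if P m then 1 else (0::real)) = real (card {m \<in> {..<n}. P m})"
  by (simp add: sum.If_cases Int_def)

lemma cross_relations_product_eq:
  fixes a1 a2 b1 b2 X Y :: "'a::comm_ring_1"
  assumes "X\<^sup>2 = 1" "Y\<^sup>2 = 1" "a1 * X + a2 * Y = 0" "b1 * X + b2 * Y = 0"
  shows "a1 * b1 = a2 * b2"
proof -
  have "a1 * b1 = a1 * b1 * X\<^sup>2" using assms(1) by simp
  also have "\<dots> = (a1 * X) * (b1 * X)" by (simp add: power2_eq_square algebra_simps)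
  also have "\<dots> = (a2 * Y) * (b2 * Y)"
    using assms(3,4) by (simp add: eq_neg_iff_add_eq_0[symmetric])
  also have "\<dots> = a2 * b2 * Y\<^sup>2" by (simp add: power2_eq_square algebra_simps)
  also have "\<dots> = a2 * b2" using assms(2) by simp
  finally show ?thesis .
qed

lemma cross_relations_product_neg:
  fixes a a' b b' u u' :: "'a::comm_ring_1"
  assumes "u\<^sup>2 = 1" "u'\<^sup>2 = 1" "a * u' = u * a'" "b * u' = - (u * b')"
  shows "a' * b' = - (a * b)"
proof -
  have "a' * b' = (u * a') * (u * b')" using assms(1) by (simp add: power2_eq_square algebra_simps)
  also have "\<dots> = (a * u') * - (b * u')"
    using assms(3,4) by (metis minus_minus mult.commute mult_minus_left)
  also have "\<dots> = - (a * b * u'\<^sup>2)" by (simp add: power2_eq_square algebra_simps)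
  also have "\<dots> = - (a * b)" using assms(2) by simp
  finally show ?thesis .
qed

lemma four_dvd_of_three_orthogonal_sign_vectors:
  fixes u v w :: "nat \<Rightarrow> int"
  assumes signs: "\<And>m. m < n \<Longrightarrow> u m \<in> {1, -1} \<and> v m \<in> {1, -1} \<and> w m \<in> {1, -1}"
    and "(\<Sum>m<n. u m * v m) = 0" "(\<Sum>m<n. u m * w m) = 0" "(\<Sum>m<n. v m * w m) = 0"
  shows "4 dvd n"
proof -
  have "(\<Sum>m<n. (u m + v m) * (u m + w m)) =
      (\<Sum>m<n. u m * u m) + (\<Sum>m<n. u m * w m) + (\<Sum>m<n. u m * v m) + (\<Sum>m<n. v m * w m)"
    by (simp add: algebra_simps sum.distrib)
  also have "(\<Sum>m<n. u m * u m) = (\<Sum>m<n. 1)"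
  proof (rule sum.cong)
    fix m assume "m \<in> {..<n}"
    then show "u m * u m = 1" using signs[of m] by auto
  qed simp
  finally have "(\<Sum>m<n. (u m + v m) * (u m + w m)) = int n" using assms(2-4) by simp
  moreover have "4 dvd (\<Sum>m<n. (u m + v m) * (u m + w m))"
  proof (rule dvd_sum)
    fix m assume "m \<in> {..<n}"
    then show "4 dvd (u m + v m) * (u m + w m)" using signs[of m] by auto
  qed
  ultimately show ?thesis by presburger
qed

lemma card_le_by_fibres:
  assumes classes: "\<And>r. r < n \<Longrightarrow> card {l \<in> {..<n}. R r l} \<le> k"
    and maps_to: "\<And>r. r < n \<Longrightarrow> f r \<in> F" and "finite F"
    and separates: "\<And>r l. r < n \<Longrightarrow> l < n \<Longrightarrow> \<not> R r l \<Longrightarrow> f r \<noteq> f l"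
  shows "n \<le> k * card F"
proof -
  have fibre: "card {l \<in> {..<n}. f l = v} \<le> k" for v
  proof (cases "\<exists>r<n. f r = v")
    case True
    then obtain r where r: "r < n" "f r = v" by blast
    then have "{l \<in> {..<n}. f l = v} \<subseteq> {l \<in> {..<n}. R r l}" using separates by blast
    then have "card {l \<in> {..<n}. f l = v} \<le> card {l \<in> {..<n}. R r l}"
      by (rule card_mono[rotated]) simp
    then show ?thesis using classes[OF r(1)] by linarith
  next
    case False
    then have "{l \<in> {..<n}. f l = v} = {}" by blast
    then show ?thesis by (metis card.empty le0)
  qed
  have "{..<n} = (\<Union>v\<in>F. {l \<in> {..<n}. f l = v})" using maps_to by auto
  then have "n = card (\<Union>v\<in>F. {l \<in> {..<n}. f l = v})" by (metis card_lessThan)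
  also have "\<dots> \<le> (\<Sum>v\<in>F. card {l \<in> {..<n}. f l = v})" by (rule card_UN_le) fact
  also have "\<dots> \<le> (\<Sum>v\<in>F. k)" by (rule sum_mono) (rule fibre)
  finally show ?thesis by (simp add: mult.commute)
qed

locale od_111 =
  fixes n :: nat and M :: "nat \<Rightarrow> nat \<Rightarrow> int"
  assumes od: "is_OD n [1, 1, 1] M"
begin

lemma abs_entry_le: "r < n \<Longrightarrow> m < n \<Longrightarrow> \<bar>M r m\<bar> \<le> 3"
  using od unfolding is_OD_def by auto

lemma rows_orthogonal:
  assumes "r < n" "l < n"
  shows "(\<Sum>m<n. od_val (M r m) x * od_val (M l m) x) =
    (if r = l then (x 1)\<^sup>2 + (x 2)\<^sup>2 + (x 3)\<^sup>2 else 0)"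
proof -
  have "{1..length [1::int, 1, 1]} = {1, 2, 3}" by auto
  then have "(\<Sum>j\<in>{1..length [1::int, 1, 1]}. of_int ([1::int, 1, 1] ! (j - 1)) * (x j)\<^sup>2) =
      (x 1)\<^sup>2 + (x 2)\<^sup>2 + (x 3)\<^sup>2"
    by simp
  then show ?thesis using od assms unfolding is_OD_def by simp
qed

lemma card_var_in_row:
  assumes r: "r < n" and k: "k \<in> {1, 2, 3}"
  shows "card {m \<in> {..<n}. \<bar>M r m\<bar> = int k} = 1"
proof -
  have "(\<Sum>m<n. od_val (M r m) (single_var k) * od_val (M r m) (single_var k)) = 1"
    using rows_orthogonal[OF r r, of "single_var k"] k by (auto simp: single_var_def)
  moreover have "(\<Sum>m<n. od_val (M r m) (single_var k) * od_val (M r m) (single_var k)) =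
      (\<Sum>m<n. if \<bar>M r m\<bar> = int k then 1 else 0)"
    by (rule sum.cong) (use k in \<open>auto simp: od_val_single_var sgn_if\<close>)
  ultimately show ?thesis by (simp add: sum_lessThan_indicator)
qed

lemma ex1_var_in_row:
  assumes "r < n" "k \<in> {1, 2, 3}"
  shows "\<exists>!m. m < n \<and> \<bar>M r m\<bar> = int k"
proof -
  obtain m0 where "{m \<in> {..<n}. \<bar>M r m\<bar> = int k} = {m0}"
    using card_var_in_row[OF assms] card_1_singletonE by blast
  then show ?thesis by (intro ex1I[of _ m0]) (auto simp: set_eq_iff)
qed

definition col :: "nat \<Rightarrow> nat \<Rightarrow> nat" where
  "col k r = (THE m. m < n \<and> \<bar>M r m\<bar> = int k)"

definition sign :: "nat \<Rightarrow> nat \<Rightarrow> int" where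
  "sign k r = sgn (M r (col k r))"

lemma col_lt: "r < n \<Longrightarrow> k \<in> {1, 2, 3} \<Longrightarrow> col k r < n"
  using theI'[OF ex1_var_in_row] unfolding col_def by blast

lemma abs_entry_col: "r < n \<Longrightarrow> k \<in> {1, 2, 3} \<Longrightarrow> \<bar>M r (col k r)\<bar> = int k"
  using theI'[OF ex1_var_in_row] unfolding col_def by blast

lemma col_unique:
  assumes "r < n" "k \<in> {1, 2, 3}" "m < n" "\<bar>M r m\<bar> = int k"
  shows "m = col k r"
  using ex1_var_in_row[OF assms(1,2)] col_lt[OF assms(1,2)] abs_entry_col[OF assms(1,2)] assms(3,4)
  by blast

lemma sign_cases: "r < n \<Longrightarrow> k \<in> {1, 2, 3} \<Longrightarrow> sign k r = 1 \<or> sign k r = -1"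
  using abs_entry_col[of r k] unfolding sign_def by (auto simp: sgn_if)

lemma sign_sq:
  assumes "r < n" "k \<in> {1, 2, 3}"
  shows "(sign k r)\<^sup>2 = 1"
  using sign_cases[OF assms] by (elim disjE) simp_all

lemma col_inj_var:
  assumes "r < n" "k \<in> {1, 2, 3}" "i \<in> {1, 2, 3}" "col k r = col i r"
  shows "k = i"
  using abs_entry_col[OF assms(1,2)] abs_entry_col[OF assms(1,3)] assms(4) by (metis of_nat_eq_iff)

lemma entry_nonzero_iff:
  assumes "r < n" "m < n"
  shows "M r m \<noteq> 0 \<longleftrightarrow> (\<exists>k\<in>{1, 2, 3}. m = col k r)"
proof
  assume "M r m \<noteq> 0"
  then have "\<bar>M r m\<bar> = int 1 \<or> \<bar>M r m\<bar> = int 2 \<or> \<bar>M r m\<bar> = int 3"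
    using abs_entry_le[OF assms] by auto
  then show "\<exists>k\<in>{1, 2, 3}. m = col k r" using col_unique[OF assms(1) _ assms(2)] by blast
next
  assume "\<exists>k\<in>{1, 2, 3}. m = col k r"
  then obtain k where k: "k \<in> {1, 2, 3}" "m = col k r" by blast
  then have "\<bar>M r m\<bar> = int k" using abs_entry_col[OF assms(1)] by simp
  then show "M r m \<noteq> 0" using k(1) by auto
qed

lemma od_val_entry_single_var:
  assumes "r < n" "m < n" "k \<in> {1, 2, 3}"
  shows "od_val (M r m) (single_var k) = (if m = col k r then of_int (sign k r) else 0)"
proof (cases "m = col k r")
  case True
  then show ?thesis using abs_entry_col[OF assms(1,3)] assms(3) by (auto simp: od_val_single_var sign_def)
next
  case False
  then have "\<bar>M r m\<bar> \<noteq> int k" using col_unique[OF assms(1,3,2)] by blast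
  then show ?thesis using False assms(3) by (auto simp: od_val_single_var)
qed

lemma sum_single_var_row_mult:
  assumes "r < n" "k \<in> {1, 2, 3}"
  shows "(\<Sum>m<n. od_val (M r m) (single_var k) * f m) = of_int (sign k r) * f (col k r)"
proof -
  have "(\<Sum>m<n. od_val (M r m) (single_var k) * f m) =
      (\<Sum>m<n. (if m = col k r then of_int (sign k r) else 0) * f m)"
  proof (rule sum.cong)
    fix m assume "m \<in> {..<n}"
    then show "od_val (M r m) (single_var k) * f m = (if m = col k r then of_int (sign k r) else 0) * f m"
      using od_val_entry_single_var[OF assms(1) _ assms(2), of m] by simp
  qed simp
  then show ?thesis using col_lt[OF assms] by (simp add: sum_lessThan_delta_mult)
qed

lemma sum_single_var_rows:
  assumes "r < n" "l < n" "k \<in> {1, 2, 3}" "i \<in> {1, 2, 3}"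
  shows "(\<Sum>m<n. od_val (M r m) (single_var k) * od_val (M l m) (single_var i)) =
    (if col k r = col i l then of_int (sign k r * sign i l) else 0)"
  using sum_single_var_row_mult[OF assms(1,3)]
    od_val_entry_single_var[OF assms(2) col_lt[OF assms(1,3)] assms(4)]
  by simp

lemma col_inj_row:
  assumes "r < n" "l < n" "k \<in> {1, 2, 3}" "col k r = col k l"
  shows "r = l"
proof (rule ccontr)
  assume "r \<noteq> l"
  then have "(\<Sum>m<n. od_val (M r m) (single_var k) * od_val (M l m) (single_var k)) = 0"
    using rows_orthogonal[OF assms(1,2)] by simp
  then have "sign k r * sign k l = 0" using sum_single_var_rows[OF assms(1-3,3)] assms(4) by simp
  then show False using sign_cases[OF assms(1,3)] sign_cases[OF assms(2,3)] by auto
qed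

text \<open>The second meeting is forced by orthogonality of the two rows at x_k = x_i = 1.\<close>

lemma col_swap:
  assumes h: "r < n" "l < n" "r \<noteq> l" "k \<in> {1, 2, 3}" "i \<in> {1, 2, 3}" "col k r = col i l"
  shows "k \<noteq> i \<and> col i r = col k l \<and> sign k r * sign i l = - (sign i r * sign k l)"
proof -
  have ki: "k \<noteq> i" using col_inj_row[OF h(1,2,4)] h by blast
  have "(\<Sum>m<n. od_val (M r m) (\<lambda>t. single_var k t + single_var i t) *
      od_val (M l m) (\<lambda>t. single_var k t + single_var i t)) = 0"
    using rows_orthogonal[OF h(1,2)] h(3) by simp
  moreover have "(\<Sum>m<n. od_val (M r m) (\<lambda>t. single_var k t + single_var i t) *
        od_val (M l m) (\<lambda>t. single_var k t + single_var i t)) =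
      (\<Sum>m<n. od_val (M r m) (single_var k) * od_val (M l m) (single_var k)) +
      (\<Sum>m<n. od_val (M r m) (single_var k) * od_val (M l m) (single_var i)) +
      (\<Sum>m<n. od_val (M r m) (single_var i) * od_val (M l m) (single_var k)) +
      (\<Sum>m<n. od_val (M r m) (single_var i) * od_val (M l m) (single_var i))"
    unfolding od_val_add by (simp add: algebra_simps sum.distrib)
  moreover have "col k r \<noteq> col k l" "col i r \<noteq> col i l"
    using col_inj_row[OF h(1,2,4)] col_inj_row[OF h(1,2,5)] h(3) by blast+
  ultimately have e: "of_int (sign k r * sign i l) +
      (if col i r = col k l then of_int (sign i r * sign k l) else 0) = (0::real)"
    using sum_single_var_rows[OF h(1,2)] h(4-6) by simp
  have "sign k r * sign i l \<noteq> 0" using sign_cases[OF h(1,4)] sign_cases[OF h(2,5)] by auto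
  then have "col i r = col k l" using e by (auto split: if_splits)
  moreover have "sign k r * sign i l = - (sign i r * sign k l)"
    using e calculation by (simp flip: of_int_add of_int_mult add: eq_neg_iff_add_eq_0)
  ultimately show ?thesis using ki by blast
qed

lemma col_surj:
  assumes "i \<in> {1, 2, 3}" "m < n"
  shows "\<exists>l<n. col i l = m"
proof -
  have "inj_on (\<lambda>l. col i l) {..<n}" using col_inj_row[OF _ _ assms(1)] by (auto simp: inj_on_def)
  moreover have "(\<lambda>l. col i l) ` {..<n} \<subseteq> {..<n}" using col_lt[OF _ assms(1)] by auto
  ultimately have "(\<lambda>l. col i l) ` {..<n} = {..<n}" by (simp add: endo_inj_surj)
  then show ?thesis using assms(2) by (metis imageE lessThan_iff)
qed

lemma col_no_third_meeting:
  assumes h: "r < n" "l < n" "r \<noteq> l" "k \<in> {1, 2, 3}" "i \<in> {1, 2, 3}" "col k r = col i l"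
    and t: "t \<in> {1, 2, 3}" "t \<noteq> k" "t \<noteq> i" and u: "u \<in> {1, 2, 3}"
  shows "col t r \<noteq> col u l"
proof
  assume tu: "col t r = col u l"
  have s1: "k \<noteq> i" "col i r = col k l" using col_swap[OF h] by auto
  have s2: "t \<noteq> u" "col u r = col t l" using col_swap[OF h(1-3) t(1) u tu] by auto
  consider "u = k" | "u = i" | "u \<noteq> k" "u \<noteq> i" by blast
  then show False
  proof cases
    case 1
    then show False using col_inj_var[OF h(1) t(1) h(5)] t tu s1 by simp
  next
    case 2
    then show False using col_inj_var[OF h(1) t(1) h(4)] t tu h(6) by simp
  next
    case 3
    then show False using s1 s2 t u h(4,5) by auto
  qed
qed

definition linked :: "nat \<Rightarrow> nat \<Rightarrow> bool" where
  "linked r l \<longleftrightarrow> (\<exists>k\<in>{1, 2, 3}. \<exists>i\<in>{1, 2, 3}. col k r = col i l)"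

lemma linked_refl: "linked r r"
  unfolding linked_def by blast

lemma linked_sym: "linked r l \<Longrightarrow> linked l r"
  unfolding linked_def by metis

lemma entry_eq_0_if_not_linked:
  assumes "r < n" "l < n" "\<not> linked r l" "k \<in> {1, 2, 3}"
  shows "M l (col k r) = 0"
  using entry_nonzero_iff[OF assms(2) col_lt[OF assms(1,4)]] assms(3,4) unfolding linked_def by blast

lemma linked_trans:
  assumes h: "r < n" "r' < n" "l < n" "linked r r'" "linked r' l"
  shows "linked r l"
proof (cases "r = r' \<or> r' = l")
  case True
  then show ?thesis using h by auto
next
  case False
  obtain k i where ki: "k \<in> {1, 2, 3}" "i \<in> {1, 2, 3}" "col k r = col i r'"
    using h(4) linked_def by blast
  obtain p q where pq: "p \<in> {1, 2, 3}" "q \<in> {1, 2, 3}" "col p r' = col q l"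
    using h(5) linked_def by blast
  have s1: "k \<noteq> i" "col i r = col k r'" using col_swap[OF h(1,2) _ ki] False by auto
  have s2: "p \<noteq> q" "col q r' = col p l" using col_swap[OF h(2,3) _ pq] False by auto
  txt \<open>The exchanged pairs {i, k} and {p, q} overlap, as there are only three indeterminates.\<close>
  have "p = i \<or> p = k \<or> q = i \<or> q = k" using ki(1,2) pq(1,2) s1(1) s2(1) by auto
  then show ?thesis
    unfolding linked_def using ki pq s1(2) s2(2) by (elim disjE) (metis)+
qed

lemma card_linked_le_4:
  assumes r: "r < n"
  shows "card {l \<in> {..<n}. linked r l} \<le> 4"
proof -
  define L where "L = (\<lambda>k i. {l \<in> {..<n}. col i l = col k r})"
  have card_L: "card (L k i) \<le> 1" if "i \<in> {1, 2, 3}" for k i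
    using col_inj_row[OF _ _ that] by (auto simp: L_def card_le_Suc0_iff_eq)
  have "{l \<in> {..<n}. linked r l} \<subseteq> {r} \<union> L 1 2 \<union> L 1 3 \<union> L 2 3"
  proof
    fix l assume "l \<in> {l \<in> {..<n}. linked r l}"
    then have l: "l < n" "linked r l" by auto
    show "l \<in> {r} \<union> L 1 2 \<union> L 1 3 \<union> L 2 3"
    proof (cases "l = r")
      case False
      obtain k i where ki: "k \<in> {1, 2, 3}" "i \<in> {1, 2, 3}" "col k r = col i l"
        using l(2) linked_def by blast
      have "k \<noteq> i" "col i r = col k l" using col_swap[OF r l(1) _ ki] False by auto
      then have "col 2 l = col 1 r \<or> col 3 l = col 1 r \<or> col 3 l = col 2 r"
        using ki by auto
      then show ?thesis unfolding L_def using l(1) by blast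
    qed simp
  qed
  then have "card {l \<in> {..<n}. linked r l} \<le> card ({r} \<union> L 1 2 \<union> L 1 3 \<union> L 2 3)"
    by (rule card_mono[rotated]) (auto simp: L_def)
  also have "\<dots> \<le> card {r} + card (L 1 2) + card (L 1 3) + card (L 2 3)"
    by (meson add_le_mono card_Un_le le_refl order_trans)
  also have "\<dots> \<le> 4" using card_L[of 2 1] card_L[of 3 1] card_L[of 3 2] by simp
  finally show ?thesis .
qed

lemma three_le_order: "0 < n \<Longrightarrow> 3 \<le> n"
proof -
  assume "0 < n"
  then have "col 1 0 \<noteq> col 2 0" "col 1 0 \<noteq> col 3 0" "col 2 0 \<noteq> col 3 0"
    using col_inj_var[of 0] by fastforce+
  moreover have "{col 1 0, col 2 0, col 3 0} \<subseteq> {..<n}" using col_lt \<open>0 < n\<close> by auto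
  ultimately show "3 \<le> n" using card_mono[of "{..<n}" "{col 1 0, col 2 0, col 3 0}"] by simp
qed

end

locale od_111_completion = od_111 +
  fixes N :: "nat \<Rightarrow> nat \<Rightarrow> int"
  assumes od_N: "is_OD n [int n - 3] N"
    and disjoint: "\<forall>x y :: nat \<Rightarrow> real. \<forall>i<n. \<forall>j<n. od_val (M i j) x * od_val (N i j) y = 0"
    and od_sum: "is_OD n ([1, 1, 1] @ [int n - 3]) (\<lambda>i j. M i j + od_shift 3 (N i j))"
begin

lemma N_cases:
  assumes "r < n" "m < n"
  shows "N r m = 0 \<or> N r m = 1 \<or> N r m = -1"
proof -
  have "\<bar>N r m\<bar> \<le> int (length [int n - 3])" using od_N assms unfolding is_OD_def by blast
  then show ?thesis by auto
qed

lemma N_eq_0_if_entry_nonzero: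
  assumes "r < n" "m < n" "M r m \<noteq> 0"
  shows "N r m = 0"
proof -
  have "od_val (M r m) (\<lambda>_. 1) * od_val (N r m) (\<lambda>_. 1) = 0"
    by (rule disjoint[rule_format, OF assms(1,2)])
  then have "of_int (sgn (M r m) * sgn (N r m)) = (0::real)" by (simp add: od_val_const_one)
  then have "sgn (M r m) * sgn (N r m) = 0" by (simp only: of_int_eq_0_iff)
  then show ?thesis using assms(3) by (simp add: sgn_0_0)
qed

lemma card_support_N: "r < n \<Longrightarrow> int (card {m \<in> {..<n}. N r m \<noteq> 0}) = int n - 3"
proof -
  assume r: "r < n"
  have "(\<Sum>m<n. od_val (N r m) (\<lambda>_. 1) * od_val (N r m) (\<lambda>_. 1)) = of_int (int n - 3)"
    using od_N r unfolding is_OD_def by auto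
  moreover have "(\<Sum>m<n. od_val (N r m) (\<lambda>_. 1) * od_val (N r m) (\<lambda>_. 1)) =
      (\<Sum>m<n. if N r m \<noteq> 0 then 1 else 0)"
    by (rule sum.cong) (auto simp: od_val_const_one sgn_if)
  ultimately have "real (card {m \<in> {..<n}. N r m \<noteq> 0}) = of_int (int n - 3)"
    by (simp add: sum_lessThan_indicator)
  then show ?thesis by linarith
qed

lemma N_nonzero_if_entry_eq_0:
  assumes h: "r < n" "m0 < n" "M r m0 = 0"
  shows "N r m0 \<noteq> 0"
proof
  assume N0: "N r m0 = 0"
  define S where "S = {col 1 r, col 2 r, col 3 r, m0}"
  have "M r (col k r) \<noteq> 0" if "k \<in> {1, 2, 3}" for k
    using entry_nonzero_iff[OF h(1) col_lt[OF h(1) that]] that by blast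
  then have "m0 \<noteq> col 1 r" "m0 \<noteq> col 2 r" "m0 \<noteq> col 3 r" using h(3) by auto
  moreover have "col 1 r \<noteq> col 2 r" "col 1 r \<noteq> col 3 r" "col 2 r \<noteq> col 3 r"
    using col_inj_var[OF h(1), of 1 2] col_inj_var[OF h(1), of 1 3] col_inj_var[OF h(1), of 2 3] by auto
  ultimately have "card S = 4" unfolding S_def by simp
  have S_sub: "S \<subseteq> {..<n}" unfolding S_def using col_lt[OF h(1)] h(2) by auto
  have "{m \<in> {..<n}. N r m \<noteq> 0} \<subseteq> {..<n} - S"
    using N_eq_0_if_entry_nonzero[OF h(1)] entry_nonzero_iff[OF h(1)] N0 unfolding S_def by auto
  then have "card {m \<in> {..<n}. N r m \<noteq> 0} \<le> card ({..<n} - S)" by (intro card_mono) auto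
  also have "\<dots> = n - 4" using card_Diff_subset[OF _ S_sub] \<open>card S = 4\<close> by (simp add: S_def)
  finally show False
    using card_support_N[OF h(1)] card_mono[OF _ S_sub] \<open>card S = 4\<close> by simp
qed

lemma N_sq_if_entry_eq_0: "r < n \<Longrightarrow> m < n \<Longrightarrow> M r m = 0 \<Longrightarrow> (N r m)\<^sup>2 = 1"
  using N_cases N_nonzero_if_entry_eq_0 by fastforce

lemma od_val_sum_entry:
  assumes "r < n" "m < n"
  shows "od_val (M r m + od_shift 3 (N r m)) x = od_val (M r m) x + of_int (N r m) * x 4"
  using N_cases[OF assms] N_eq_0_if_entry_nonzero[OF assms]
  by (cases "M r m = 0") (auto simp: od_val_def od_shift_def)

lemma sum_rows_orthogonal:
  assumes "r < n" "l < n" "r \<noteq> l"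
  shows "(\<Sum>m<n. (od_val (M r m) x + of_int (N r m) * x 4) *
    (od_val (M l m) x + of_int (N l m) * x 4)) = 0"
proof -
  have "(\<Sum>m<n. od_val (M r m + od_shift 3 (N r m)) x * od_val (M l m + od_shift 3 (N l m)) x) = 0"
    using od_sum assms unfolding is_OD_def by auto
  moreover have "(\<Sum>m<n. od_val (M r m + od_shift 3 (N r m)) x * od_val (M l m + od_shift 3 (N l m)) x) =
      (\<Sum>m<n. (od_val (M r m) x + of_int (N r m) * x 4) * (od_val (M l m) x + of_int (N l m) * x 4))"
    by (rule sum.cong) (auto simp: od_val_sum_entry assms)
  ultimately show ?thesis by simp
qed

lemma four_dvd_order: "4 dvd n"
proof (cases "n = 0")
  case False
  define h where "h r m = sgn (M r m) + N r m" for r m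
  have "h r m \<in> {1, -1}" if "r < n" "m < n" for r m
    using N_cases[OF that] N_eq_0_if_entry_nonzero[OF that] N_nonzero_if_entry_eq_0[OF that]
    by (cases "M r m = 0") (auto simp: h_def sgn_if)
  moreover have "(\<Sum>m<n. h r m * h l m) = 0" if "r < n" "l < n" "r \<noteq> l" for r l
    using sum_rows_orthogonal[OF that, of "\<lambda>_. 1"]
    by (simp flip: of_int_mult of_int_add of_int_sum add: od_val_const_one h_def)
  moreover have "3 \<le> n" using three_le_order False by simp
  ultimately show ?thesis
    by (intro four_dvd_of_three_orthogonal_sign_vectors[of n "h 0" "h 1" "h 2"]) auto
qed simp

text \<open>In M + N the indeterminate of N is x_4; orthogonality at x_k = x_4 = 1, less the parts
  seen at x_k = 1 and at x_4 = 1 alone, leaves only the two cross terms.\<close>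

lemma cross_entries:
  assumes h: "r < n" "l < n" "r \<noteq> l" "k \<in> {1, 2, 3}"
  shows "sign k r * N l (col k r) + sign k l * N r (col k l) = 0"
proof -
  have no_x4: "od_val (M r' m) (single_var 4) = 0" if "r' < n" "m < n" for r' m
    using abs_entry_le[OF that] by (simp add: od_val_single_var)
  define x where "x = (\<lambda>t. single_var k t + single_var 4 t)"
  have "x 4 = 1" using h(4) by (auto simp: x_def single_var_def)
  have "od_val (M r' m) x = od_val (M r' m) (single_var k)" if "r' < n" "m < n" for r' m
    unfolding x_def od_val_add using no_x4[OF that] by simp
  then have "(\<Sum>m<n. (od_val (M r m) (single_var k) + of_int (N r m)) *
      (od_val (M l m) (single_var k) + of_int (N l m))) = 0"
    using sum_rows_orthogonal[OF h(1-3), of x] \<open>x 4 = 1\<close> h(1,2) by simp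
  moreover have "(\<Sum>m<n. of_int (N r m) * of_int (N l m)) = (0::real)"
    using sum_rows_orthogonal[OF h(1-3), of "single_var 4"] no_x4 h(1,2) by (simp add: single_var_def)
  moreover have "(\<Sum>m<n. od_val (M r m) (single_var k) * od_val (M l m) (single_var k)) = 0"
    using sum_single_var_rows[OF h(1,2,4,4)] col_inj_row[OF h(1,2,4)] h(3) by auto
  moreover have "(\<Sum>m<n. od_val (M r m) (single_var k) * of_int (N l m)) =
      of_int (sign k r * N l (col k r))"
    using sum_single_var_row_mult[OF h(1,4)] by simp
  moreover have "(\<Sum>m<n. of_int (N r m) * od_val (M l m) (single_var k)) =
      of_int (N r (col k l) * sign k l)"
    using sum_single_var_row_mult[OF h(2,4), of "\<lambda>m. of_int (N r m)"] by (simp add: mult.commute)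
  moreover have "(\<Sum>m<n. (od_val (M r m) (single_var k) + of_int (N r m)) *
        (od_val (M l m) (single_var k) + of_int (N l m))) =
      (\<Sum>m<n. od_val (M r m) (single_var k) * od_val (M l m) (single_var k)) +
      (\<Sum>m<n. od_val (M r m) (single_var k) * of_int (N l m)) +
      (\<Sum>m<n. of_int (N r m) * od_val (M l m) (single_var k)) +
      (\<Sum>m<n. of_int (N r m) * of_int (N l m))"
    by (simp add: algebra_simps sum.distrib)
  ultimately have "of_int (sign k r * N l (col k r) + sign k l * N r (col k l)) = (0::real)"
    by (simp add: mult.commute)
  then show ?thesis by (simp only: of_int_eq_0_iff)
qed

end

locale pd_111 =
  fixes n :: nat and M1 M2 N :: "nat \<Rightarrow> nat \<Rightarrow> int"
  assumes pd: "is_PD n [1, 1, 1] [1, 1, 1] [int n - 3] M1 M2 N"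
begin

sublocale A: od_111_completion n M1 N
  using pd unfolding is_PD_def od_111_completion_def od_111_def od_111_completion_axioms_def
  by (simp add: numeral_3_eq_3)

sublocale B: od_111_completion n M2 N
  using pd unfolding is_PD_def od_111_completion_def od_111_def od_111_completion_axioms_def
  by (simp add: numeral_3_eq_3)

lemma supports_eq: "r < n \<Longrightarrow> m < n \<Longrightarrow> M2 r m \<noteq> 0 \<longleftrightarrow> M1 r m \<noteq> 0"
  using A.N_eq_0_if_entry_nonzero A.N_nonzero_if_entry_eq_0
    B.N_eq_0_if_entry_nonzero B.N_nonzero_if_entry_eq_0 by blast

lemma col_A_eq_col_B:
  assumes "r < n" "k \<in> {1, 2, 3}"
  shows "\<exists>j\<in>{1, 2, 3}. A.col k r = B.col j r"
proof -
  have "M1 r (A.col k r) \<noteq> 0" using A.entry_nonzero_iff[OF assms(1) A.col_lt[OF assms]] assms(2) by blast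
  then show ?thesis
    using B.entry_nonzero_iff[OF assms(1) A.col_lt[OF assms]] supports_eq[OF assms(1) A.col_lt[OF assms]]
    by blast
qed

lemma col_B_eq_col_A:
  assumes "r < n" "j \<in> {1, 2, 3}"
  shows "\<exists>k\<in>{1, 2, 3}. B.col j r = A.col k r"
proof -
  have "M2 r (B.col j r) \<noteq> 0" using B.entry_nonzero_iff[OF assms(1) B.col_lt[OF assms]] assms(2) by blast
  then show ?thesis
    using A.entry_nonzero_iff[OF assms(1) B.col_lt[OF assms]] supports_eq[OF assms(1) B.col_lt[OF assms]]
    by blast
qed

lemma sign_products_commute:
  assumes "r < n" "l < n" "k \<in> {1, 2, 3}" "p \<in> {1, 2, 3}"
    and "A.col k r = B.col p l" "B.col p r = A.col k l"
  shows "A.sign k r * B.sign p l = B.sign p r * A.sign k l"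
proof -
  have "(\<Sum>m<n. od_val (M1 r m) (single_var k) * od_val (M2 l m) (single_var p)) =
      (\<Sum>m<n. od_val (M2 r m) (single_var p) * od_val (M1 l m) (single_var k))"
    using pd assms(1,2) unfolding is_PD_def by blast
  moreover have "(\<Sum>m<n. od_val (M1 r m) (single_var k) * od_val (M2 l m) (single_var p)) =
      of_int (A.sign k r * B.sign p l)"
    using A.sum_single_var_row_mult[OF assms(1,3)]
      B.od_val_entry_single_var[OF assms(2) A.col_lt[OF assms(1,3)] assms(4)] assms(5) by simp
  moreover have "(\<Sum>m<n. od_val (M2 r m) (single_var p) * od_val (M1 l m) (single_var k)) =
      of_int (B.sign p r * A.sign k l)"
    using B.sum_single_var_row_mult[OF assms(1,4)]
      A.od_val_entry_single_var[OF assms(2) B.col_lt[OF assms(1,4)] assms(3)] assms(6) by simp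
  ultimately show ?thesis by (simp only: of_int_eq_iff)
qed

lemma sign_product_eq_if_not_linked:
  assumes h: "r < n" "l < n" "\<not> A.linked r l" "k \<in> {1, 2, 3}" "j \<in> {1, 2, 3}"
    and cols: "A.col k r = B.col j r" "A.col k l = B.col j l"
  shows "A.sign k r * B.sign j r = A.sign k l * B.sign j l"
proof -
  have "r \<noteq> l" using h(3) A.linked_refl by blast
  have "\<not> A.linked l r" using h(3) A.linked_sym by blast
  have "(N l (A.col k r))\<^sup>2 = 1"
    by (rule A.N_sq_if_entry_eq_0[OF h(2) A.col_lt[OF h(1,4)] A.entry_eq_0_if_not_linked[OF h(1-4)]])
  moreover have "(N r (A.col k l))\<^sup>2 = 1"
    by (rule A.N_sq_if_entry_eq_0[OF h(1) A.col_lt[OF h(2,4)]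
          A.entry_eq_0_if_not_linked[OF h(2,1) \<open>\<not> A.linked l r\<close> h(4)]])
  moreover have "A.sign k r * N l (A.col k r) + A.sign k l * N r (A.col k l) = 0"
    by (rule A.cross_entries[OF h(1,2) \<open>r \<noteq> l\<close> h(4)])
  moreover have "B.sign j r * N l (A.col k r) + B.sign j l * N r (A.col k l) = 0"
    using B.cross_entries[OF h(1,2) \<open>r \<noteq> l\<close> h(5)] cols by simp
  ultimately show ?thesis by (rule cross_relations_product_eq)
qed

lemma linked_row_with_opposite_sign_product:
  assumes h: "r < n" "k \<in> {1, 2, 3}" "j \<in> {1, 2, 3}" "A.col k r = B.col j r"
  shows "\<exists>l<n. A.linked r l \<and> A.col k l = B.col j l \<and>
    A.sign k l * B.sign j l = - (A.sign k r * B.sign j r)"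
proof -
  define i :: nat where "i = (if k = 1 then 2 else 1)"
  have i: "i \<in> {1, 2, 3}" "i \<noteq> k" by (auto simp: i_def)
  obtain l where l: "l < n" "A.col i l = A.col k r" using A.col_surj[OF i(1) A.col_lt[OF h(1,2)]] by blast
  have "r \<noteq> l" using A.col_inj_var[OF h(1) i(1) h(2)] l(2) i(2) by blast
  have swap_A: "A.col i r = A.col k l"
    using A.col_swap[OF h(1) l(1) \<open>r \<noteq> l\<close> h(2) i(1) l(2)[symmetric]] by blast
  obtain p where p: "p \<in> {1, 2, 3}" "A.col k r = B.col p l" using col_A_eq_col_B[OF l(1) i(1)] l(2) by auto
  have swap_B: "j \<noteq> p" "B.col p r = B.col j l" "B.sign j r * B.sign p l = - (B.sign p r * B.sign j l)"
    using B.col_swap[OF h(1) l(1) \<open>r \<noteq> l\<close> h(3) p(1)] h(4) p(2) by auto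
  obtain t where t: "t \<in> {1, 2, 3}" "B.col p r = A.col t r" using col_B_eq_col_A[OF h(1) p(1)] by blast
  have "t \<noteq> k" using B.col_inj_var[OF h(1) p(1) h(3)] swap_B(1) t(2) h(4) by auto
  have "t = i"
  proof (rule ccontr)
    assume "t \<noteq> i"
    obtain u where u: "u \<in> {1, 2, 3}" "B.col j l = A.col u l" using col_B_eq_col_A[OF l(1) h(3)] by blast
    have "A.col t r \<noteq> A.col u l"
      using A.col_no_third_meeting[OF h(1) l(1) \<open>r \<noteq> l\<close> h(2) i(1) l(2)[symmetric] t(1)
          \<open>t \<noteq> k\<close> \<open>t \<noteq> i\<close> u(1)] .
    then show False using t(2) swap_B(2) u(2) by simp
  qed
  then have cross_cols: "B.col p r = A.col k l" using swap_A t(2) by simp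
  have "A.sign k r * B.sign p l = B.sign p r * A.sign k l"
    by (rule sign_products_commute[OF h(1) l(1) h(2) p]) (fact cross_cols)
  then have "A.sign k l * B.sign j l = - (A.sign k r * B.sign j r)"
    using cross_relations_product_neg[OF B.sign_sq[OF h(1) p(1)] B.sign_sq[OF l(1) p(1)] _ swap_B(3)] by blast
  moreover have "A.linked r l" unfolding A.linked_def using h(2) i(1) l(2) by metis
  moreover have "A.col k l = B.col j l" using cross_cols swap_B(2) by simp
  ultimately show ?thesis using l(1) by blast
qed

lemma partner_var_differs_if_not_linked:
  assumes h: "r < n" "l < n" "\<not> A.linked r l" "j \<in> {1, 2, 3}"
    and cols: "A.col 1 r = B.col j r" "A.col 1 l = B.col j' l"
  shows "j \<noteq> j'"
proof
  assume "j = j'"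
  obtain r' where r': "r' < n" "A.linked r r'" "A.col 1 r' = B.col j r'"
      "A.sign 1 r' * B.sign j r' = - (A.sign 1 r * B.sign j r)"
    using linked_row_with_opposite_sign_product[OF h(1) _ h(4) cols(1)] by auto
  have "\<not> A.linked r' l" using A.linked_trans[OF h(1) r'(1) h(2) r'(2)] h(3) by blast
  then have "A.sign 1 r' * B.sign j r' = A.sign 1 l * B.sign j l"
    using sign_product_eq_if_not_linked[OF r'(1) h(2) _ _ h(4) r'(3)] cols(2) \<open>j = j'\<close> by simp
  moreover have "A.sign 1 r * B.sign j r = A.sign 1 l * B.sign j l"
    using sign_product_eq_if_not_linked[OF h(1-3) _ h(4) cols(1)] cols(2) \<open>j = j'\<close> by simp
  moreover have "A.sign 1 r * B.sign j r \<noteq> 0"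
    using A.sign_cases[OF h(1), of 1] B.sign_cases[OF h(1,4)] by auto
  ultimately show False using r'(4) by simp
qed

lemma order_le_12: "n \<le> 12"
proof -
  have "\<forall>r<n. \<exists>j. j \<in> {1, 2, 3} \<and> A.col 1 r = B.col j r" using col_A_eq_col_B by blast
  then obtain f where f: "\<And>r. r < n \<Longrightarrow> f r \<in> {1, 2, 3} \<and> A.col 1 r = B.col (f r) r"
    by metis
  have "n \<le> 4 * card {1, 2, 3 :: nat}"
  proof (rule card_le_by_fibres[where R = A.linked and f = f])
    show "f r \<noteq> f l" if "r < n" "l < n" "\<not> A.linked r l" for r l
      using partner_var_differs_if_not_linked[OF that] f that(1,2) by blast
  qed (use f A.card_linked_le_4 in auto)
  then show ?thesis by simp
qed

end

theorem theorem2p6: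
  fixes n :: nat
  assumes "n > 0" and "n \<notin> {4, 8, 12}"
  shows "\<not> (\<exists>M1 M2 N. is_PD n [1, 1, 1] [1, 1, 1] [int n - 3] M1 M2 N)"
proof
  assume "\<exists>M1 M2 N. is_PD n [1, 1, 1] [1, 1, 1] [int n - 3] M1 M2 N"
  then obtain M1 M2 N where "pd_111 n M1 M2 N" unfolding pd_111_def by blast
  then interpret pd_111 n M1 M2 N .
  have "4 dvd n" "n \<le> 12" by (fact A.four_dvd_order, fact order_le_12)
  then have "n = 0 \<or> n = 4 \<or> n = 8 \<or> n = 12" by presburger
  then show False using assms by auto
qed

end
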